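(* Let $X\in\mathbb{R}^{n\times d}$ with rows $x_1,\dots,x_n$ and let $w\in\mathbb{R}^n$ with $w_i\in\{v_1,\dots,v_t\}$ for all $i\in[n]$, where $v_1,\dots,v_t>0$. The range space induced by $\mathcal{F}_{\log}=\{\beta\mapsto w_i\cdot g(x_i\beta)\mid i\in[n]\}$ has VC dimension at most $t(d+1)$.
   Context: $g(z)=\ln(1+e^z)$. For a finite set $\mathcal{F}$ of functions $\mathbb{R}^d\to\mathbb{R}_{\ge0}$, for $\beta\in\mathbb{R}^d$ and $r\ge 0$ let $\mathrm{range}_{\mathcal{F}}(\beta,r)=\{f\in\mathcal{F}\mid f(\beta)\ge r\}$, and let $\mathrm{ranges}(\mathcal{F})=\{\mathrm{range}_{\mathcal{F}}(\beta,r)\mid\beta\in\mathbb{R}^d,r\ge 0\}$; the range space induced by $\mathcal{F}$ is $(\mathcal{F},\mathrm{ranges}(\mathcal{F}))$. Its VC dimension is the largest size of a subset $G\subseteq\mathcal{F}$ that is shattered, i.e. $|\{G\cap R\mid R\in\mathrm{ranges}(\mathcal{F})\}|=2^{|G|}$. *)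

theory Defs
  imports "HOL-Analysis.Analysis"
begin

definition g :: "real \<Rightarrow> real" where
  "g z = ln (1 + exp z)"

definition range_F :: "('a \<Rightarrow> real) set \<Rightarrow> 'a \<Rightarrow> real \<Rightarrow> ('a \<Rightarrow> real) set" where
  "range_F F \<beta> r = {f \<in> F. f \<beta> \<ge> r}"

definition ranges :: "('a \<Rightarrow> real) set \<Rightarrow> ('a \<Rightarrow> real) set set" where
  "ranges F = {range_F F \<beta> r | \<beta> r. r \<ge> 0}"

definition shattered :: "('a \<Rightarrow> real) set \<Rightarrow> ('a \<Rightarrow> real) set \<Rightarrow> bool" where
  "shattered F G \<longleftrightarrow> card {G \<inter> R | R. R \<in> ranges F} = 2 ^ card G"

definition vc_dim :: "('a \<Rightarrow> real) set \<Rightarrow> nat" where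
  "vc_dim F = Max {card G | G. G \<subseteq> F \<and> shattered F G}"

end

theory Submission
  imports Defs
begin

text \<open>Each weight class \<open>{\<beta> \<mapsto> c \<cdot> g(y \<bullet> \<beta>)}\<close> with \<open>c > 0\<close> has at most \<open>d + 1\<close> members
  in a shattered set: since \<open>c \<cdot> g\<close> is increasing, a range \<open>c \<cdot> g(y \<bullet> \<beta>) \<ge> r\<close> cuts out
  an upper set of the projections \<open>y \<bullet> \<beta>\<close>, i.e. the points lying in an open or closed
  halfspace; by Radon's theorem some subset of any \<open>d + 2\<close> points cannot be cut out
  this way. The \<open>t\<close> weight classes cover the whole family, so a shattered set has at
  most \<open>t(d + 1)\<close> elements.\<close>

lemma Radon_not_halfspace_separable:
  fixes S :: "'a::euclidean_space set"
  assumes "finite S" "card S \<ge> DIM('a) + 2"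
  obtains P where "P \<subseteq> S" "\<And>\<beta>. \<exists>p\<in>P. \<exists>q\<in>S - P. p \<bullet> \<beta> \<le> q \<bullet> \<beta>"
proof -
  obtain M P where "M \<inter> P = {}" "M \<union> P = S" and z: "convex hull M \<inter> convex hull P \<noteq> {}"
    using Radon_partition[OF assms(1) affine_dependent_biggerset[OF assms]] by blast
  then have P: "P \<subseteq> S" "finite P" and M: "M = S - P"
    using assms(1) by (auto intro: rev_finite_subset)
  have "\<exists>p\<in>P. \<exists>q\<in>M. p \<bullet> \<beta> \<le> q \<bullet> \<beta>" for \<beta>
  proof (rule ccontr)
    assume "\<not> ?thesis"
    then have sep: "\<And>p q. p \<in> P \<Longrightarrow> q \<in> M \<Longrightarrow> q \<bullet> \<beta> < p \<bullet> \<beta>"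
      by (simp add: not_le)
    have "P \<noteq> {}" using z by auto
    then obtain p where "is_arg_min (\<lambda>y. y \<bullet> \<beta>) (\<lambda>y. y \<in> P) p"
      using ex_is_arg_min_if_finite[OF \<open>finite P\<close>] by blast
    then have "p \<in> P" and p_min: "\<And>y. y \<in> P \<Longrightarrow> p \<bullet> \<beta> \<le> y \<bullet> \<beta>"
      by (simp_all add: is_arg_min_linorder)
    have "convex hull P \<subseteq> {y. \<beta> \<bullet> y \<ge> \<beta> \<bullet> p}"
      using p_min by (intro hull_minimal convex_halfspace_ge) (auto simp: inner_commute)
    moreover have "convex hull M \<subseteq> {y. \<beta> \<bullet> y < \<beta> \<bullet> p}"
      using sep[OF \<open>p \<in> P\<close>] by (intro hull_minimal convex_halfspace_lt) (auto simp: inner_commute)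
    ultimately show False using z by fastforce
  qed
  with P M that show ?thesis by blast
qed

lemma g_mono: "a \<le> b \<Longrightarrow> g a \<le> g b"
  unfolding g_def by (simp add: add_pos_pos)

lemma shattered_realizes_subset:
  assumes "finite G" "shattered F G" "H \<subseteq> G"
  obtains \<beta> r where "G \<inter> range_F F \<beta> r = H"
proof -
  have "{G \<inter> R | R. R \<in> ranges F} \<subseteq> Pow G" by auto
  moreover have "card {G \<inter> R | R. R \<in> ranges F} = card (Pow G)"
    using assms(1,2) by (simp add: shattered_def card_Pow)
  ultimately have "{G \<inter> R | R. R \<in> ranges F} = Pow G"
    using assms(1) by (simp add: card_subset_eq)
  with assms(3) obtain R where "R \<in> ranges F" "H = G \<inter> R" by blast
  with that show ?thesis unfolding ranges_def by blast
qed

lemma vc_dim_le: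
  assumes "finite F" "\<And>G. G \<subseteq> F \<Longrightarrow> shattered F G \<Longrightarrow> card G \<le> k"
  shows "vc_dim F \<le> k"
proof -
  have "shattered F {}"
  proof -
    have "range_F F undefined 0 \<in> ranges F" unfolding ranges_def by auto
    then have "{{} \<inter> R | R. R \<in> ranges F} = {{}}" by auto
    then show ?thesis unfolding shattered_def by simp
  qed
  moreover have "finite {card G | G. G \<subseteq> F \<and> shattered F G}"
    by (rule finite_subset[of _ "{..card F}"]) (auto intro: card_mono[OF assms(1)])
  ultimately show ?thesis
    unfolding vc_dim_def using assms(2) by (subst Max_le_iff) auto
qed

lemma card_shattered_weight_class:
  fixes c :: real
  assumes "c > 0" "G \<subseteq> F" "finite G" "shattered F G"
    and "H \<subseteq> G" "H \<subseteq> (\<lambda>y \<beta>. c * g (y \<bullet> \<beta>)) ` (UNIV :: 'a::euclidean_space set)"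
  shows "card H \<le> DIM('a) + 1"
proof (rule ccontr)
  define \<phi> where "\<phi> y = (\<lambda>\<beta>. c * g (y \<bullet> \<beta>))" for y :: 'a
  have "H \<subseteq> \<phi> ` UNIV" using assms(6) unfolding \<phi>_def .
  then obtain Y where inj: "inj_on \<phi> Y" and H: "H = \<phi> ` Y"
    unfolding subset_image_inj by blast
  have "finite H" using assms(3,5) by (rule rev_finite_subset)
  then have "finite Y" using H finite_image_iff[OF inj] by simp
  assume "\<not> card H \<le> DIM('a) + 1"
  then have "card Y \<ge> DIM('a) + 2"
    using H card_image[OF inj] by simp
  then obtain P where "P \<subseteq> Y" and P: "\<And>\<beta>. \<exists>p\<in>P. \<exists>q\<in>Y - P. p \<bullet> \<beta> \<le> q \<bullet> \<beta>"
    using Radon_not_halfspace_separable[OF \<open>finite Y\<close>] by blast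
  then have "\<phi> ` P \<subseteq> G" using H assms(5) by blast
  then obtain \<beta> r where range: "G \<inter> range_F F \<beta> r = \<phi> ` P"
    using shattered_realizes_subset assms(3,4) by blast
  obtain p q where "p \<in> P" "q \<in> Y - P" and pq: "p \<bullet> \<beta> \<le> q \<bullet> \<beta>" using P by blast
  have "\<phi> p \<in> range_F F \<beta> r" using range \<open>p \<in> P\<close> by blast
  then have "r \<le> \<phi> p \<beta>" unfolding range_F_def by simp
  also have "\<dots> \<le> \<phi> q \<beta>"
    unfolding \<phi>_def using g_mono[OF pq] assms(1) by simp
  finally have "\<phi> q \<in> range_F F \<beta> r"
    using \<open>q \<in> Y - P\<close> H assms(2,5) unfolding range_F_def by blast
  moreover have "\<phi> q \<in> G" using \<open>q \<in> Y - P\<close> H assms(5) by blast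
  ultimately have "\<phi> q \<in> \<phi> ` P" using range by blast
  with inj \<open>P \<subseteq> Y\<close> \<open>q \<in> Y - P\<close> show False by (auto simp: inj_on_image_mem_iff)
qed

theorem lemma6:
  fixes x :: "nat \<Rightarrow> real ^ 'd" and w :: "nat \<Rightarrow> real" and v :: "nat \<Rightarrow> real"
    and n t :: nat
  assumes "\<forall>j<t. v j > 0"
    and "\<forall>i<n. \<exists>j<t. w i = v j"
  shows "vc_dim ((\<lambda>i. \<lambda>\<beta>. w i * g (x i \<bullet> \<beta>)) ` {..<n}) \<le> t * (CARD('d) + 1)"
proof (rule vc_dim_le)
  let ?F = "(\<lambda>i. \<lambda>\<beta>. w i * g (x i \<bullet> \<beta>)) ` {..<n}"
  define weight_class where
    "weight_class j = (\<lambda>y \<beta>. v j * g (y \<bullet> \<beta>)) ` (UNIV :: (real ^ 'd) set)" for j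
  fix G assume G: "G \<subseteq> ?F" "shattered ?F G"
  have "finite G" using G(1) finite_subset by blast
  have "G \<subseteq> (\<Union>j<t. G \<inter> weight_class j)"
    using G(1) assms(2) unfolding weight_class_def by fastforce
  then have "card G \<le> card (\<Union>j<t. G \<inter> weight_class j)"
    by (rule card_mono[rotated]) (simp add: \<open>finite G\<close>)
  also have "\<dots> \<le> (\<Sum>j<t. card (G \<inter> weight_class j))"
    by (rule card_UN_le) simp
  also have "\<dots> \<le> (\<Sum>j<t. CARD('d) + 1)"
  proof (rule sum_mono)
    fix j assume "j \<in> {..<t}"
    then show "card (G \<inter> weight_class j) \<le> CARD('d) + 1"
      using card_shattered_weight_class[OF _ G(1) \<open>finite G\<close> G(2), of "v j" "G \<inter> weight_class j"]
        assms(1) unfolding weight_class_def by simp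
  qed
  finally show "card G \<le> t * (CARD('d) + 1)" by simp
qed simp

end
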